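(* The finite element scheme "Find $u_h\in V_h$ such that $\int_a^b \mathcal{D}\, u_h^\prime v_h^\prime\,\mathrm{d}x =\int_a^b f v_h\,\mathrm{d}x$ for all $v_h\in V_h$", in the limit $\beta\to 0$ (i.e. for $\beta=0$), is equivalent to the Babuška-Zlámal DG method: Find $u_h\in V_h^D$ such that \begin{equation} \sum_{i=0}^{N}\int_{I_i} u_h^\prime v_h^\prime\,\mathrm{d}x + D\sum_{i=0}^{N+1}[u_h]_{x_i}[v_h]_{x_i}= \int_a^b fv_h\,\mathrm{d}x,\quad \forall v_h\in V_h^D. \end{equation}
   Context: Consider the 1D Poisson problem $-u''=f$ on $(a,b)$ with zero Dirichlet boundary conditions. Take mesh nodes $a=x_0<x_1<\ldots<x_{N+1}=b$ and the discontinuous piecewise linear space $V_h^D=\{v\in L^2([a,b]): v|_{I_i}\in\mathbb{P}_1(I_i),\ i=0,\ldots,N\}$ with $I_i=[x_i,x_{i+1}]$. For $v_h\in V_h^D$ the jump at an interior node is $[v_h]_{x_i}=v_h(x_i^+)-v_h(x_i^-)$, and at the endpoints $[v_h]_{x_0}=v_h(x_0^+)$, $[v_h]_{x_{N+1}}=-v_h(x_{N+1}^-)$. The mesh is enriched with auxiliary nodes $y_i$: $a=y_0<x_0<y_1<x_1<\ldots<y_{N+1}<x_{N+1}=b$, giving intervals $I_i=[x_i,y_{i+1}]$ and small intervals $J_i=[y_i,x_i]$ of length $|J_i|=\beta$ for all $i=0,\dots,N+1$. $V_h$ is the space of continuous piecewise linear functions on this enriched mesh (linear on each $I_i$ and each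 $J_i$) vanishing at $a$ and $b$. The modified diffusion coefficient is $\mathcal{D}(x)=1$ on the $I_i$ and $\mathcal{D}(x)=\beta D$ on the $J_i$, with a constant $D>0$. As $\beta\to 0$ (each $J_i$ collapses to the point $x_i$), values are identified via $u_h(y_i)=u_h(x_i^-)$, $u_h(x_i)=u_h(x_i^+)$, so that every $v_h\in V_h$ is identified with a limiting $v_h\in V_h^D$, and $v_h(x_i)-v_h(y_i)\to[v_h]_{x_i}$. *)

theory Defs
  imports "HOL-Analysis.Analysis"
begin

text \<open>Original mesh nodes: \<xi> 0 = a < \<xi> 1 < ... < \<xi> (N+1) = b.
  A function of the DG space V_h^D is represented by a real function that is affine on
  each open interval (\<xi> i, \<xi> (i+1)), i = 0..N (node values are irrelevant, as for L2).\<close>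

definition in_VhD :: "(nat \<Rightarrow> real) \<Rightarrow> nat \<Rightarrow> (real \<Rightarrow> real) \<Rightarrow> bool" where
  "in_VhD \<xi> N v \<longleftrightarrow>
     (\<forall>i\<le>N. \<exists>c d. \<forall>x\<in>{\<xi> i<..<\<xi> (Suc i)}. v x = c * x + d)"

definition lval :: "(real \<Rightarrow> real) \<Rightarrow> real \<Rightarrow> real" where
  "lval v t = Lim (at_left t) v"

definition rval :: "(real \<Rightarrow> real) \<Rightarrow> real \<Rightarrow> real" where
  "rval v t = Lim (at_right t) v"

definition jump :: "(nat \<Rightarrow> real) \<Rightarrow> nat \<Rightarrow> (real \<Rightarrow> real) \<Rightarrow> nat \<Rightarrow> real" where
  "jump \<xi> N v i =
     (if i = 0 then rval v (\<xi> 0)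
      else if i = Suc N then - lval v (\<xi> (Suc N))
      else rval v (\<xi> i) - lval v (\<xi> i))"

definition bz_form :: "(nat \<Rightarrow> real) \<Rightarrow> nat \<Rightarrow> real \<Rightarrow> (real \<Rightarrow> real) \<Rightarrow> (real \<Rightarrow> real) \<Rightarrow> real" where
  "bz_form \<xi> N D u v =
     (\<Sum>i\<le>N. integral {\<xi> i..\<xi> (Suc i)} (\<lambda>x. deriv u x * deriv v x))
     + D * (\<Sum>i\<le>Suc N. jump \<xi> N u i * jump \<xi> N v i)"

definition pl_interp :: "(nat \<Rightarrow> real) \<Rightarrow> (nat \<Rightarrow> real) \<Rightarrow> nat \<Rightarrow> real \<Rightarrow> real" where
  "pl_interp P V M x =
     (if \<exists>k<M. P k \<le> x \<and> x \<le> P (Suc k) then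
        (let k = (LEAST k. k < M \<and> P k \<le> x \<and> x \<le> P (Suc k))
         in V k + (V (Suc k) - V k) * (x - P k) / (P (Suc k) - P k))
      else 0)"

text \<open>Enriched mesh y_0 < x_0 < y_1 < x_1 < ... < y_(N+1) < x_(N+1), listed as
  z_(2i) = y_i, z_(2i+1) = x_i.\<close>
definition enr_nodes :: "(nat \<Rightarrow> real) \<Rightarrow> (nat \<Rightarrow> real) \<Rightarrow> nat \<Rightarrow> real" where
  "enr_nodes X Y k = (if even k then Y (k div 2) else X (k div 2))"

text \<open>Identification: u_h(y_i) = u_h(x_i^-), u_h(x_i) = u_h(x_i^+), with u_h(a) = u_h(b) = 0.\<close>
definition enr_vals :: "(nat \<Rightarrow> real) \<Rightarrow> nat \<Rightarrow> (real \<Rightarrow> real) \<Rightarrow> nat \<Rightarrow> real" where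
  "enr_vals \<xi> N v k =
     (let i = k div 2 in
      if even k then (if i = 0 then 0 else lval v (\<xi> i))
      else (if i = Suc N then 0 else rval v (\<xi> i)))"

definition embed :: "(nat \<Rightarrow> real) \<Rightarrow> nat \<Rightarrow> (nat \<Rightarrow> real) \<Rightarrow> (nat \<Rightarrow> real)
    \<Rightarrow> (real \<Rightarrow> real) \<Rightarrow> real \<Rightarrow> real" where
  "embed \<xi> N X Y v = pl_interp (enr_nodes X Y) (enr_vals \<xi> N v) (2 * N + 3)"

definition Dcoef :: "nat \<Rightarrow> (nat \<Rightarrow> real) \<Rightarrow> (nat \<Rightarrow> real) \<Rightarrow> real \<Rightarrow> real \<Rightarrow> real \<Rightarrow> real" where
  "Dcoef N X Y D \<beta> x = (if \<exists>i\<le>Suc N. Y i \<le> x \<and> x \<le> X i then \<beta> * D else 1)"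

definition fe_form :: "real \<Rightarrow> real \<Rightarrow> nat \<Rightarrow> (nat \<Rightarrow> real) \<Rightarrow> (nat \<Rightarrow> real) \<Rightarrow> real \<Rightarrow> real
    \<Rightarrow> (real \<Rightarrow> real) \<Rightarrow> (real \<Rightarrow> real) \<Rightarrow> real" where
  "fe_form a b N X Y D \<beta> w z =
     integral {a..b} (\<lambda>x. Dcoef N X Y D \<beta> x * deriv w x * deriv z x)"

end

theory Submission
  imports Defs
begin

text \<open>On a collapsing interval \<open>J\<^sub>i\<close> of length \<open>\<beta>\<close> the finite element function has slope
  \<open>[v]/\<beta>\<close>, so the contribution \<open>\<beta> D \<cdot> ([u]/\<beta>) \<cdot> ([v]/\<beta>) \<cdot> \<beta> = D [u] [v]\<close> of \<open>J\<^sub>i\<close> to the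
  stiffness form does not depend on \<open>\<beta>\<close> at all, while the intervals \<open>I\<^sub>i\<close> contribute as for the
  DG functions, on intervals whose endpoints converge. On \<open>J\<^sub>i\<close> the finite element function is
  bounded by \<open>|v(x\<^sub>i\<^sup>-)| + |v(x\<^sub>i\<^sup>+)|\<close>, so its load vanishes with the integral of \<open>|f|\<close> over
  \<open>J\<^sub>i\<close>; on \<open>I\<^sub>i\<close> the load, written through the moments of \<open>f\<close>, is continuous in the endpoints.
  Hence for every test function the finite element residual converges to the Babuska-Zlamal residual,
  and the two variational problems agree by uniqueness of limits.\<close>

section \<open>Linear interpolation on an interval and its load\<close>

definition lin_interp :: "real \<Rightarrow> real \<Rightarrow> real \<Rightarrow> real \<Rightarrow> real \<Rightarrow> real" where
  "lin_interp p q V0 V1 x = V0 + (V1 - V0) / (q - p) * (x - p)"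

text \<open>The value of \<open>\<integral>\<^sub>p\<^sup>q f \<cdot> lin_interp p q V0 V1\<close>, written through the first two moments
  of \<open>f\<close> so that its dependence on the endpoints is visibly continuous.\<close>
definition lin_load :: "(real \<Rightarrow> real) \<Rightarrow> real \<Rightarrow> real \<Rightarrow> real \<Rightarrow> real \<Rightarrow> real" where
  "lin_load f p q V0 V1 = V0 * integral {p..q} f
     + (V1 - V0) / (q - p) * (integral {p..q} (\<lambda>x. x * f x) - p * integral {p..q} f)"

lemma has_integral_consecutive_sum:
  fixes P :: "nat \<Rightarrow> real" and h :: "real \<Rightarrow> 'a::banach"
  assumes "\<forall>k<M. P k \<le> P (Suc k)" "\<forall>k<M. (h has_integral I k) {P k..P (Suc k)}"
  shows "(h has_integral (\<Sum>k<M. I k)) {P 0..P M}"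
  using assms
proof (induction M)
  case 0
  then show ?case by (simp add: has_integral_refl)
next
  case (Suc M)
  have "P 0 \<le> P M"
    by (rule lift_Suc_mono_le_ivl[of "{..<M}"]) (use Suc.prems(1) in auto)
  then have "(h has_integral (\<Sum>k<M. I k) + I M) {P 0..P (Suc M)}"
    using Suc by (intro has_integral_combine[of "P 0" "P M" "P (Suc M)"]) auto
  then show ?case
    by (simp add: add.commute)
qed

lemma has_integral_const_on_open:
  fixes p q C :: real
  assumes "p \<le> q" "\<And>x. x \<in> {p<..<q} \<Longrightarrow> h x = C"
  shows "(h has_integral C * (q - p)) {p..q}"
proof -
  have const: "((\<lambda>x. C) has_integral C * (q - p)) {p..q}"
    using has_integral_const_real[of C p q] assms(1) by (simp add: mult.commute)
  show ?thesis
    using has_integral_spike_finite[OF _ _ const, of "{p, q}" h] assms(2) by auto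
qed

lemma tendsto_integral_endpoints:
  fixes g :: "real \<Rightarrow> real" and p q :: "'b \<Rightarrow> real"
  assumes g: "g integrable_on {a..b}" and p: "(p \<longlongrightarrow> p0) F" and q: "(q \<longlongrightarrow> q0) F"
    and ev: "eventually (\<lambda>t. a \<le> p t \<and> p t \<le> q t \<and> q t \<le> b) F"
    and le: "a \<le> p0" "p0 \<le> q0" "q0 \<le> b"
  shows "((\<lambda>t. integral {p t..q t} g) \<longlongrightarrow> integral {p0..q0} g) F"
proof -
  define \<Phi> where "\<Phi> x = integral {a..x} g" for x
  have \<Phi>: "continuous_on {a..b} \<Phi>"
    unfolding \<Phi>_def by (rule indefinite_integral_continuous_1[OF g])
  have eq: "integral {r..s} g = \<Phi> s - \<Phi> r" if "a \<le> r" "r \<le> s" "s \<le> b" for r s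
  proof -
    have "g integrable_on {a..s}"
      using that by (intro integrable_subinterval_real[OF g]) auto
    then have "integral {a..r} g + integral {r..s} g = integral {a..s} g"
      using that by (intro Henstock_Kurzweil_Integration.integral_combine) auto
    then show ?thesis unfolding \<Phi>_def by simp
  qed
  have "eventually (\<lambda>t. q t \<in> {a..b}) F" "eventually (\<lambda>t. p t \<in> {a..b}) F"
    using ev by (auto elim: eventually_mono)
  then have "((\<lambda>t. \<Phi> (q t) - \<Phi> (p t)) \<longlongrightarrow> \<Phi> q0 - \<Phi> p0) F"
    using continuous_on_tendsto_compose[OF \<Phi> q] continuous_on_tendsto_compose[OF \<Phi> p] le
    by (intro tendsto_diff) (auto simp: o_def)
  then have "((\<lambda>t. integral {p t..q t} g) \<longlongrightarrow> \<Phi> q0 - \<Phi> p0) F"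
    by (rule Lim_transform_eventually) (use ev eq in \<open>auto elim!: eventually_mono\<close>)
  then show ?thesis
    using eq le by simp
qed

lemma affine_eq_lin_interp:
  fixes c d p q x :: real
  assumes "p \<noteq> q"
  shows "c * x + d = lin_interp p q (c * p + d) (c * q + d) x"
proof -
  have "(c * q + d) - (c * p + d) = c * (q - p)"
    by (simp add: algebra_simps)
  then have "((c * q + d) - (c * p + d)) / (q - p) = c"
    using assms by simp
  then show ?thesis
    unfolding lin_interp_def by (simp add: algebra_simps)
qed

lemma abs_lin_interp_le:
  fixes x p q V0 V1 :: real
  assumes "p < q" "x \<in> {p..q}"
  shows "\<bar>lin_interp p q V0 V1 x\<bar> \<le> \<bar>V0\<bar> + \<bar>V1\<bar>"
proof -
  define t where "t = (x - p) / (q - p)"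
  have t: "0 \<le> t" "t \<le> 1"
    using assms unfolding t_def by auto
  have "lin_interp p q V0 V1 x = V0 + (V1 - V0) * t"
    unfolding lin_interp_def t_def by simp
  also have "\<dots> = (1 - t) * V0 + t * V1"
    by (simp add: algebra_simps)
  also have "\<bar>\<dots>\<bar> \<le> \<bar>(1 - t) * V0\<bar> + \<bar>t * V1\<bar>"
    by (rule abs_triangle_ineq)
  also have "\<dots> \<le> \<bar>V0\<bar> + \<bar>V1\<bar>"
    using t by (intro add_mono) (simp_all add: abs_mult mult_left_le_one_le)
  finally show ?thesis .
qed

lemma deriv_eq_lin_interp_slope:
  fixes w :: "real \<Rightarrow> real"
  assumes "x \<in> {p<..<q}" "\<forall>y\<in>{p<..<q}. w y = lin_interp p q V0 V1 y"
  shows "deriv w x = (V1 - V0) / (q - p)"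
proof -
  have "(lin_interp p q V0 V1 has_field_derivative (V1 - V0) / (q - p)) (at x)"
    unfolding lin_interp_def[abs_def] using assms(1) by (auto intro!: derivative_eq_intros)
  then have "(w has_field_derivative (V1 - V0) / (q - p)) (at x)"
    by (rule has_field_derivative_transform_within_open[of _ _ _ "{p<..<q}"]) (use assms in auto)
  then show ?thesis
    by (rule DERIV_imp_deriv)
qed

lemma has_integral_mult_lin_interp:
  fixes f w :: "real \<Rightarrow> real"
  assumes f: "f integrable_on {p..q}" and xf: "(\<lambda>x. x * f x) integrable_on {p..q}"
    and w: "\<And>x. x \<in> {p<..<q} \<Longrightarrow> w x = lin_interp p q V0 V1 x"
  shows "((\<lambda>x. f x * w x) has_integral lin_load f p q V0 V1) {p..q}"
proof -
  have affine: "((\<lambda>x. V0 * f x + (V1 - V0) / (q - p) * (x * f x - p * f x))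
          has_integral lin_load f p q V0 V1) {p..q}"
    unfolding lin_load_def using f xf
    by (intro has_integral_add has_integral_mult_right has_integral_diff) auto
  have "f x * w x = V0 * f x + (V1 - V0) / (q - p) * (x * f x - p * f x)"
    if "x \<in> {p..q} - {p, q}" for x
  proof -
    have distrib: "f x * (V0 + s * (x - p)) = V0 * f x + s * (x * f x - p * f x)" for s
      by (simp add: algebra_simps)
    have "f x * w x = f x * (V0 + (V1 - V0) / (q - p) * (x - p))"
      using that w[of x] unfolding lin_interp_def by auto
    also have "\<dots> = V0 * f x + (V1 - V0) / (q - p) * (x * f x - p * f x)"
      by (rule distrib)
    finally show ?thesis .
  qed
  then show ?thesis
    using has_integral_spike_finite[OF _ _ affine, of "{p, q}"] by auto
qed

lemma abs_lin_load_le: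
  fixes f :: "real \<Rightarrow> real"
  assumes f: "f integrable_on {p..q}" and xf: "(\<lambda>x. x * f x) integrable_on {p..q}"
    and af: "(\<lambda>x. \<bar>f x\<bar>) integrable_on {p..q}" and pq: "p < q"
  shows "\<bar>lin_load f p q V0 V1\<bar> \<le> (\<bar>V0\<bar> + \<bar>V1\<bar>) * integral {p..q} (\<lambda>x. \<bar>f x\<bar>)"
proof -
  have load: "((\<lambda>x. f x * lin_interp p q V0 V1 x) has_integral lin_load f p q V0 V1) {p..q}"
    by (rule has_integral_mult_lin_interp[OF f xf]) simp
  have bound: "((\<lambda>x. (\<bar>V0\<bar> + \<bar>V1\<bar>) * \<bar>f x\<bar>)
      has_integral (\<bar>V0\<bar> + \<bar>V1\<bar>) * integral {p..q} (\<lambda>x. \<bar>f x\<bar>)) {p..q}"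
    using af by (intro has_integral_mult_right) auto
  have "norm (f x * lin_interp p q V0 V1 x) \<le> (\<bar>V0\<bar> + \<bar>V1\<bar>) * \<bar>f x\<bar>" if "x \<in> {p..q}" for x
    using abs_lin_interp_le[OF pq that, of V0 V1]
    by (simp add: abs_mult mult.commute mult_left_mono)
  then have "norm (integral {p..q} (\<lambda>x. f x * lin_interp p q V0 V1 x))
      \<le> integral {p..q} (\<lambda>x. (\<bar>V0\<bar> + \<bar>V1\<bar>) * \<bar>f x\<bar>)"
    using load bound by (intro integral_norm_bound_integral) auto
  then show ?thesis
    using integral_unique[OF load] integral_unique[OF bound] by simp
qed

lemma tendsto_lin_load:
  fixes f :: "real \<Rightarrow> real" and p q :: "'b \<Rightarrow> real"
  assumes f: "f integrable_on {a..b}" and xf: "(\<lambda>x. x * f x) integrable_on {a..b}"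
    and p: "(p \<longlongrightarrow> p0) F" and q: "(q \<longlongrightarrow> q0) F"
    and ev: "eventually (\<lambda>t. a \<le> p t \<and> p t \<le> q t \<and> q t \<le> b) F"
    and le: "a \<le> p0" "p0 < q0" "q0 \<le> b"
  shows "((\<lambda>t. lin_load f (p t) (q t) V0 V1) \<longlongrightarrow> lin_load f p0 q0 V0 V1) F"
  unfolding lin_load_def using le
  by (intro tendsto_intros p q tendsto_integral_endpoints[OF f p q ev]
        tendsto_integral_endpoints[OF xf p q ev]) auto

lemma tendsto_lin_load_collapse:
  fixes f :: "real \<Rightarrow> real" and p q :: "'b \<Rightarrow> real"
  assumes f: "f absolutely_integrable_on {a..b}" and xf: "(\<lambda>x. x * f x) integrable_on {a..b}"
    and p: "(p \<longlongrightarrow> c) F" and q: "(q \<longlongrightarrow> c) F"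
    and ev: "eventually (\<lambda>t. a \<le> p t \<and> p t < q t \<and> q t \<le> b) F"
    and c: "a \<le> c" "c \<le> b"
  shows "((\<lambda>t. lin_load f (p t) (q t) V0 V1) \<longlongrightarrow> 0) F"
proof (rule Lim_null_comparison)
  have fi: "f integrable_on {a..b}" and af: "(\<lambda>x. \<bar>f x\<bar>) integrable_on {a..b}"
    using f unfolding absolutely_integrable_on_def by auto
  show "eventually (\<lambda>t. norm (lin_load f (p t) (q t) V0 V1)
          \<le> (\<bar>V0\<bar> + \<bar>V1\<bar>) * integral {p t..q t} (\<lambda>x. \<bar>f x\<bar>)) F"
    using ev
  proof (rule eventually_mono)
    fix t assume t: "a \<le> p t \<and> p t < q t \<and> q t \<le> b"
    then have sub: "{p t..q t} \<subseteq> {a..b}" by auto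
    show "norm (lin_load f (p t) (q t) V0 V1) \<le> (\<bar>V0\<bar> + \<bar>V1\<bar>) * integral {p t..q t} (\<lambda>x. \<bar>f x\<bar>)"
      using t by (simp only: real_norm_def)
        (rule abs_lin_load_le[OF integrable_subinterval_real[OF fi sub]
            integrable_subinterval_real[OF xf sub] integrable_subinterval_real[OF af sub]], simp)
  qed
  have "((\<lambda>t. integral {p t..q t} (\<lambda>x. \<bar>f x\<bar>)) \<longlongrightarrow> integral {c..c} (\<lambda>x. \<bar>f x\<bar>)) F"
    using ev c by (intro tendsto_integral_endpoints[OF af p q]) (auto elim: eventually_mono)
  then show "((\<lambda>t. (\<bar>V0\<bar> + \<bar>V1\<bar>) * integral {p t..q t} (\<lambda>x. \<bar>f x\<bar>)) \<longlongrightarrow> 0) F"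
    by (auto intro: tendsto_mult_right_zero)
qed

lemma integrable_mult_id:
  fixes f :: "real \<Rightarrow> real"
  assumes "f absolutely_integrable_on {a..b}"
  shows "(\<lambda>x. x * f x) integrable_on {a..b}"
proof -
  have "(\<lambda>x. x * f x) absolutely_integrable_on {a..b}"
    using assms
    by (intro absolutely_integrable_bounded_measurable_product_real
        continuous_imp_measurable_on_sets_lebesgue) (auto intro: continuous_on_id)
  then show ?thesis
    unfolding absolutely_integrable_on_def by auto
qed

section \<open>Piecewise linear and discontinuous Galerkin functions\<close>

lemma nodes_mono_le:
  fixes P :: "nat \<Rightarrow> real"
  assumes "\<forall>k<M. P k < P (Suc k)" "i \<le> j" "j \<le> M"
  shows "P i \<le> P j"
  by (rule lift_Suc_mono_le_ivl[of "{..<M}"]) (use assms in \<open>auto simp: less_imp_le\<close>)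

lemma pl_interp_eq_lin_interp:
  fixes P V :: "nat \<Rightarrow> real"
  assumes P: "\<forall>k<M. P k < P (Suc k)" and k: "k < M" and x: "x \<in> {P k<..<P (Suc k)}"
  shows "pl_interp P V M x = lin_interp (P k) (P (Suc k)) (V k) (V (Suc k)) x"
proof -
  have "(LEAST k. k < M \<and> P k \<le> x \<and> x \<le> P (Suc k)) = k"
  proof (rule Least_equality)
    show "k < M \<and> P k \<le> x \<and> x \<le> P (Suc k)"
      using k x by auto
    fix k' assume k': "k' < M \<and> P k' \<le> x \<and> x \<le> P (Suc k')"
    show "k \<le> k'"
    proof (rule ccontr)
      assume "\<not> k \<le> k'"
      then have "P (Suc k') \<le> P k"
        using nodes_mono_le[OF P] k by simp
      then show False
        using k' x by auto
    qed
  qed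
  moreover have "\<exists>k<M. P k \<le> x \<and> x \<le> P (Suc k)"
    using k x by auto
  ultimately show ?thesis
    unfolding pl_interp_def lin_interp_def by (simp add: Let_def)
qed

lemma deriv_pl_interp:
  fixes P V :: "nat \<Rightarrow> real"
  assumes "\<forall>k<M. P k < P (Suc k)" "k < M" "x \<in> {P k<..<P (Suc k)}"
  shows "deriv (pl_interp P V M) x = (V (Suc k) - V k) / (P (Suc k) - P k)"
  using assms pl_interp_eq_lin_interp[OF assms(1,2)] by (intro deriv_eq_lin_interp_slope) auto

lemma one_sided_values_affine:
  fixes v :: "real \<Rightarrow> real"
  assumes pq: "p < q" and v: "\<forall>x\<in>{p<..<q}. v x = c * x + d"
  shows "lval v q = c * q + d" "rval v p = c * p + d"
proof -
  have "(v \<longlongrightarrow> c * q + d) (at_left q)"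
    by (rule Lim_transform_eventually[of "\<lambda>x. c * x + d"]) (auto intro!: tendsto_eq_intros
        eventually_mono[OF eventually_at_left_real[OF pq]] simp: v)
  then show "lval v q = c * q + d"
    unfolding lval_def by (intro tendsto_Lim) auto
  have "(v \<longlongrightarrow> c * p + d) (at_right p)"
    by (rule Lim_transform_eventually[of "\<lambda>x. c * x + d"]) (auto intro!: tendsto_eq_intros
        eventually_mono[OF eventually_at_right_real[OF pq]] simp: v)
  then show "rval v p = c * p + d"
    unfolding rval_def by (intro tendsto_Lim) auto
qed

lemma in_VhD_eq_lin_interp:
  assumes v: "in_VhD \<xi> N v" and i: "i \<le> N" and lt: "\<xi> i < \<xi> (Suc i)"
  shows "\<forall>x\<in>{\<xi> i<..<\<xi> (Suc i)}. v x = lin_interp (\<xi> i) (\<xi> (Suc i)) (rval v (\<xi> i)) (lval v (\<xi> (Suc i))) x"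
proof -
  obtain c d where cd: "\<forall>x\<in>{\<xi> i<..<\<xi> (Suc i)}. v x = c * x + d"
    using v i unfolding in_VhD_def by blast
  show ?thesis
  proof
    fix x assume "x \<in> {\<xi> i<..<\<xi> (Suc i)}"
    then have "v x = c * x + d"
      using cd by blast
    also have "\<dots> = lin_interp (\<xi> i) (\<xi> (Suc i)) (c * \<xi> i + d) (c * \<xi> (Suc i) + d) x"
      using lt by (intro affine_eq_lin_interp) simp
    finally show "v x = lin_interp (\<xi> i) (\<xi> (Suc i)) (rval v (\<xi> i)) (lval v (\<xi> (Suc i))) x"
      using one_sided_values_affine[OF lt cd] by simp
  qed
qed

definition increment :: "(nat \<Rightarrow> real) \<Rightarrow> (real \<Rightarrow> real) \<Rightarrow> nat \<Rightarrow> real" where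
  "increment \<xi> v i = lval v (\<xi> (Suc i)) - rval v (\<xi> i)"

lemma bz_form_eq:
  assumes mesh: "\<forall>i\<le>N. \<xi> i < \<xi> (Suc i)" and u: "in_VhD \<xi> N u" and v: "in_VhD \<xi> N v"
  shows "bz_form \<xi> N D u v = (\<Sum>i\<le>N. increment \<xi> u i * increment \<xi> v i / (\<xi> (Suc i) - \<xi> i))
           + D * (\<Sum>i\<le>Suc N. jump \<xi> N u i * jump \<xi> N v i)"
proof -
  have "integral {\<xi> i..\<xi> (Suc i)} (\<lambda>x. deriv u x * deriv v x)
          = increment \<xi> u i * increment \<xi> v i / (\<xi> (Suc i) - \<xi> i)" if i: "i \<le> N" for i
  proof -
    let ?l = "\<xi> (Suc i) - \<xi> i"
    have lt: "\<xi> i < \<xi> (Suc i)"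
      using mesh i by simp
    have "deriv w x = increment \<xi> w i / ?l"
      if "in_VhD \<xi> N w" "x \<in> {\<xi> i<..<\<xi> (Suc i)}" for w x
      unfolding increment_def
      by (rule deriv_eq_lin_interp_slope[OF that(2) in_VhD_eq_lin_interp[OF that(1) i lt]])
    then have "((\<lambda>x. deriv u x * deriv v x) has_integral increment \<xi> u i / ?l * (increment \<xi> v i / ?l) * ?l)
            {\<xi> i..\<xi> (Suc i)}"
      using lt u v by (intro has_integral_const_on_open) auto
    then show ?thesis
      using lt by (simp add: integral_unique power2_eq_square)
  qed
  then show ?thesis
    unfolding bz_form_def by simp
qed

lemma integral_mult_VhD:
  fixes f :: "real \<Rightarrow> real"
  assumes mesh: "\<xi> 0 = a" "\<xi> (Suc N) = b" "\<forall>i\<le>N. \<xi> i < \<xi> (Suc i)"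
    and f: "f integrable_on {a..b}" and xf: "(\<lambda>x. x * f x) integrable_on {a..b}"
    and v: "in_VhD \<xi> N v"
  shows "integral {a..b} (\<lambda>x. f x * v x)
           = (\<Sum>i\<le>N. lin_load f (\<xi> i) (\<xi> (Suc i)) (rval v (\<xi> i)) (lval v (\<xi> (Suc i))))"
proof -
  have strict: "\<forall>k<Suc N. \<xi> k < \<xi> (Suc k)"
    using mesh(3) by auto
  have "((\<lambda>x. f x * v x) has_integral lin_load f (\<xi> i) (\<xi> (Suc i)) (rval v (\<xi> i)) (lval v (\<xi> (Suc i))))
          {\<xi> i..\<xi> (Suc i)}" if i: "i < Suc N" for i
  proof -
    have sub: "{\<xi> i..\<xi> (Suc i)} \<subseteq> {a..b}"
      using nodes_mono_le[OF strict, of 0 i] nodes_mono_le[OF strict, of "Suc i" "Suc N"] i mesh(1,2)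
      by auto
    show ?thesis
      using in_VhD_eq_lin_interp[OF v] mesh(3) i
      by (intro has_integral_mult_lin_interp integrable_subinterval_real[OF f sub]
          integrable_subinterval_real[OF xf sub]) auto
  qed
  then have "((\<lambda>x. f x * v x) has_integral
      (\<Sum>i<Suc N. lin_load f (\<xi> i) (\<xi> (Suc i)) (rval v (\<xi> i)) (lval v (\<xi> (Suc i))))) {\<xi> 0..\<xi> (Suc N)}"
    using strict by (intro has_integral_consecutive_sum) (auto simp: less_imp_le)
  then show ?thesis
    using mesh(1,2) by (simp add: integral_unique lessThan_Suc_atMost)
qed

section \<open>The enriched mesh\<close>

definition enriched_mesh :: "real \<Rightarrow> real \<Rightarrow> nat \<Rightarrow> (nat \<Rightarrow> real) \<Rightarrow> (nat \<Rightarrow> real) \<Rightarrow> real \<Rightarrow> bool" where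
  "enriched_mesh a b N X Y \<beta> \<longleftrightarrow> \<beta> > 0 \<and> Y 0 = a \<and> X (Suc N) = b
     \<and> (\<forall>i\<le>Suc N. X i - Y i = \<beta>) \<and> (\<forall>i\<le>N. X i < Y (Suc i))"

lemma enr_nodes_even [simp]: "enr_nodes X Y (2 * i) = Y i"
  by (simp add: enr_nodes_def)

lemma enr_nodes_odd [simp]: "enr_nodes X Y (Suc (2 * i)) = X i"
  by (simp add: enr_nodes_def)

lemma enr_vals_odd [simp]: "i \<le> N \<Longrightarrow> enr_vals \<xi> N v (Suc (2 * i)) = rval v (\<xi> i)"
  by (simp add: enr_vals_def Let_def)

lemma enr_nodes_even_Suc [simp]: "enr_nodes X Y (Suc (Suc (2 * i))) = Y (Suc i)"
  by (simp add: enr_nodes_def)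

lemma enr_vals_even_Suc [simp]: "enr_vals \<xi> N v (Suc (Suc (2 * i))) = lval v (\<xi> (Suc i))"
  by (simp add: enr_vals_def Let_def)

lemma enr_vals_jump: "i \<le> Suc N \<Longrightarrow> enr_vals \<xi> N v (Suc (2 * i)) - enr_vals \<xi> N v (2 * i) = jump \<xi> N v i"
  by (auto simp add: enr_vals_def Let_def jump_def)

lemma enriched_mesh_strict:
  assumes E: "enriched_mesh a b N X Y \<beta>"
  shows "\<forall>k<2 * N + 3. enr_nodes X Y k < enr_nodes X Y (Suc k)"
proof (intro allI impI)
  fix k assume k: "k < 2 * N + 3"
  show "enr_nodes X Y k < enr_nodes X Y (Suc k)"
  proof (cases "even k")
    case True
    then obtain i where i: "k = 2 * i"
      by (rule evenE)
    have "X i - Y i = \<beta>" "\<beta> > 0"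
      using E i k by (auto simp: enriched_mesh_def)
    then show ?thesis
      by (simp add: i)
  next
    case False
    then obtain i where i: "k = Suc (2 * i)"
      by (metis oddE Suc_eq_plus1)
    have "X i < Y (Suc i)"
      using E i k by (auto simp: enriched_mesh_def)
    then show ?thesis
      by (simp add: i)
  qed
qed

lemma enriched_mesh_ends:
  assumes E: "enriched_mesh a b N X Y \<beta>"
  shows "enr_nodes X Y 0 = a" "enr_nodes X Y (2 * N + 3) = b"
proof -
  show "enr_nodes X Y 0 = a"
    using E enr_nodes_even[of X Y 0] by (simp add: enriched_mesh_def del: enr_nodes_even)
  have "2 * N + 3 = Suc (2 * Suc N)"
    by simp
  then show "enr_nodes X Y (2 * N + 3) = b"
    using E by (simp only: enr_nodes_odd) (simp add: enriched_mesh_def)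
qed

lemma enriched_mesh_range:
  assumes E: "enriched_mesh a b N X Y \<beta>" and k: "k \<le> 2 * N + 3"
  shows "a \<le> enr_nodes X Y k \<and> enr_nodes X Y k \<le> b"
  using nodes_mono_le[OF enriched_mesh_strict[OF E], of 0 k]
    nodes_mono_le[OF enriched_mesh_strict[OF E], of k "2 * N + 3"] k enriched_mesh_ends[OF E]
  by auto

lemma enriched_mesh_bounds:
  assumes E: "enriched_mesh a b N X Y \<beta>"
  shows "i \<le> Suc N \<Longrightarrow> a \<le> Y i \<and> Y i < X i \<and> X i \<le> b"
    and "i \<le> N \<Longrightarrow> a \<le> X i \<and> X i < Y (Suc i) \<and> Y (Suc i) \<le> b"
proof -
  assume i: "i \<le> Suc N"
  then show "a \<le> Y i \<and> Y i < X i \<and> X i \<le> b"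
    using enriched_mesh_range[OF E, of "2 * i"] enriched_mesh_range[OF E, of "Suc (2 * i)"]
      enriched_mesh_strict[OF E, rule_format, of "2 * i"] by auto
next
  assume i: "i \<le> N"
  then show "a \<le> X i \<and> X i < Y (Suc i) \<and> Y (Suc i) \<le> b"
    using i enriched_mesh_range[OF E, of "Suc (2 * i)"] enriched_mesh_range[OF E, of "Suc (Suc (2 * i))"]
      enriched_mesh_strict[OF E, rule_format, of "Suc (2 * i)"] by auto
qed

lemma sum_lessThan_even_odd:
  fixes g :: "nat \<Rightarrow> 'a::comm_monoid_add"
  shows "(\<Sum>k<2 * m + 1. g k) = (\<Sum>i\<le>m. g (2 * i)) + (\<Sum>i<m. g (Suc (2 * i)))"
proof (induction m)
  case 0
  then show ?case by simp
next
  case (Suc m)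
  have "(\<Sum>k<2 * Suc m + 1. g k) = (\<Sum>k<2 * m + 1. g k) + g (Suc (2 * m)) + g (2 * Suc m)"
    by (simp add: numeral_2_eq_2)
  then show ?case
    using Suc by (simp add: ac_simps)
qed

lemma integral_enriched_mesh_split:
  fixes h :: "real \<Rightarrow> real"
  assumes E: "enriched_mesh a b N X Y \<beta>"
    and h: "\<And>k. k < 2 * N + 3 \<Longrightarrow> (h has_integral I k) {enr_nodes X Y k..enr_nodes X Y (Suc k)}"
  shows "integral {a..b} h = (\<Sum>i\<le>Suc N. I (2 * i)) + (\<Sum>i\<le>N. I (Suc (2 * i)))"
proof -
  have "(h has_integral (\<Sum>k<2 * N + 3. I k)) {enr_nodes X Y 0..enr_nodes X Y (2 * N + 3)}"
    using enriched_mesh_strict[OF E] h by (intro has_integral_consecutive_sum) (auto simp: less_imp_le)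
  then have "integral {a..b} h = (\<Sum>k<2 * N + 3. I k)"
    using enriched_mesh_ends[OF E] by (simp add: integral_unique)
  also have "2 * N + 3 = 2 * Suc N + 1"
    by simp
  finally show ?thesis
    by (simp only: sum_lessThan_even_odd lessThan_Suc_atMost)
qed

lemma Dcoef_enriched_piece:
  assumes E: "enriched_mesh a b N X Y \<beta>" and k: "k < 2 * N + 3"
    and x: "x \<in> {enr_nodes X Y k<..<enr_nodes X Y (Suc k)}"
  shows "Dcoef N X Y D \<beta> x = (if even k then \<beta> * D else 1)"
proof (cases "even k")
  case True
  then obtain i where i: "k = 2 * i"
    by (rule evenE)
  then have "i \<le> Suc N" "Y i \<le> x \<and> x \<le> X i"
    using k x by auto
  then show ?thesis
    using True unfolding Dcoef_def by auto
next
  case False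
  then obtain i where i: "k = Suc (2 * i)"
    by (metis oddE Suc_eq_plus1)
  have "\<not> (Y j \<le> x \<and> x \<le> X j)" if j: "j \<le> Suc N" for j
  proof (cases "j \<le> i")
    case True
    then have "X j \<le> X i"
      using nodes_mono_le[OF enriched_mesh_strict[OF E], of "Suc (2 * j)" k] i k by simp
    then show ?thesis
      using x i by simp
  next
    case False
    have "enr_nodes X Y (Suc k) = Y (Suc i)"
      using i by simp
    moreover have "enr_nodes X Y (Suc k) \<le> Y j"
      using nodes_mono_le[OF enriched_mesh_strict[OF E], of "Suc k" "2 * j"] False i j by simp
    ultimately show ?thesis
      using x by simp
  qed
  then show ?thesis
    using False unfolding Dcoef_def by auto
qed

lemma fe_form_embed:
  assumes E: "enriched_mesh a b N X Y \<beta>"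
  shows "fe_form a b N X Y D \<beta> (embed \<xi> N X Y u) (embed \<xi> N X Y v)
           = (\<Sum>i\<le>N. increment \<xi> u i * increment \<xi> v i / (Y (Suc i) - X i))
             + D * (\<Sum>i\<le>Suc N. jump \<xi> N u i * jump \<xi> N v i)"
proof -
  let ?P = "enr_nodes X Y"
  define slope where
    "slope w k = (enr_vals \<xi> N w (Suc k) - enr_vals \<xi> N w k) / (?P (Suc k) - ?P k)" for w k
  define I where "I k = (if even k then \<beta> * D else 1) * slope u k * slope v k * (?P (Suc k) - ?P k)" for k
  have "((\<lambda>x. Dcoef N X Y D \<beta> x * deriv (embed \<xi> N X Y u) x * deriv (embed \<xi> N X Y v) x)
          has_integral I k) {?P k..?P (Suc k)}" if k: "k < 2 * N + 3" for k
    unfolding I_def slope_def embed_def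
    using enriched_mesh_strict[OF E] k Dcoef_enriched_piece[OF E k]
      deriv_pl_interp[OF enriched_mesh_strict[OF E] k]
    by (intro has_integral_const_on_open) (auto simp: less_imp_le)
  then have "fe_form a b N X Y D \<beta> (embed \<xi> N X Y u) (embed \<xi> N X Y v)
               = (\<Sum>i\<le>Suc N. I (2 * i)) + (\<Sum>i\<le>N. I (Suc (2 * i)))"
    unfolding fe_form_def by (rule integral_enriched_mesh_split[OF E])
  also have "(\<Sum>i\<le>Suc N. I (2 * i)) = D * (\<Sum>i\<le>Suc N. jump \<xi> N u i * jump \<xi> N v i)"
    unfolding sum_distrib_left
  proof (rule sum.cong)
    fix i assume "i \<in> {..Suc N}"
    then have i: "i \<le> Suc N" and "X i - Y i = \<beta>" "\<beta> \<noteq> 0"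
      using E by (auto simp: enriched_mesh_def)
    then show "I (2 * i) = D * (jump \<xi> N u i * jump \<xi> N v i)"
      unfolding I_def slope_def by (simp add: enr_vals_jump[OF i])
  qed simp
  also have "(\<Sum>i\<le>N. I (Suc (2 * i))) = (\<Sum>i\<le>N. increment \<xi> u i * increment \<xi> v i / (Y (Suc i) - X i))"
  proof (rule sum.cong)
    fix i assume "i \<in> {..N}"
    then have i: "i \<le> N" and "Y (Suc i) - X i \<noteq> 0"
      using E by (auto simp: enriched_mesh_def)
    then show "I (Suc (2 * i)) = increment \<xi> u i * increment \<xi> v i / (Y (Suc i) - X i)"
      unfolding I_def slope_def increment_def by (simp add: power2_eq_square)
  qed simp
  finally show ?thesis
    by (simp only: add.commute)
qed

lemma integral_mult_embed:
  fixes f :: "real \<Rightarrow> real"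
  assumes E: "enriched_mesh a b N X Y \<beta>"
    and f: "f integrable_on {a..b}" and xf: "(\<lambda>x. x * f x) integrable_on {a..b}"
  shows "integral {a..b} (\<lambda>x. f x * embed \<xi> N X Y v x)
           = (\<Sum>i\<le>Suc N. lin_load f (Y i) (X i) (enr_vals \<xi> N v (2 * i)) (enr_vals \<xi> N v (Suc (2 * i))))
             + (\<Sum>i\<le>N. lin_load f (X i) (Y (Suc i)) (rval v (\<xi> i)) (lval v (\<xi> (Suc i))))"
proof -
  let ?P = "enr_nodes X Y" and ?V = "enr_vals \<xi> N v"
  have "((\<lambda>x. f x * embed \<xi> N X Y v x) has_integral lin_load f (?P k) (?P (Suc k)) (?V k) (?V (Suc k)))
          {?P k..?P (Suc k)}" if k: "k < 2 * N + 3" for k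
  proof -
    have sub: "{?P k..?P (Suc k)} \<subseteq> {a..b}"
      using enriched_mesh_range[OF E, of k] enriched_mesh_range[OF E, of "Suc k"] k by auto
    show ?thesis
      unfolding embed_def using pl_interp_eq_lin_interp[OF enriched_mesh_strict[OF E] k]
      by (intro has_integral_mult_lin_interp integrable_subinterval_real[OF f sub]
          integrable_subinterval_real[OF xf sub])
  qed
  then have "integral {a..b} (\<lambda>x. f x * embed \<xi> N X Y v x)
      = (\<Sum>i\<le>Suc N. lin_load f (?P (2 * i)) (?P (Suc (2 * i))) (?V (2 * i)) (?V (Suc (2 * i))))
        + (\<Sum>i\<le>N. lin_load f (?P (Suc (2 * i))) (?P (Suc (Suc (2 * i))))
                                  (?V (Suc (2 * i))) (?V (Suc (Suc (2 * i)))))"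
    by (rule integral_enriched_mesh_split[OF E])
  also have "\<dots> = (\<Sum>i\<le>Suc N. lin_load f (Y i) (X i) (?V (2 * i)) (?V (Suc (2 * i))))
        + (\<Sum>i\<le>N. lin_load f (X i) (Y (Suc i)) (rval v (\<xi> i)) (lval v (\<xi> (Suc i))))"
    by (intro arg_cong2[where f = "(+)"] sum.cong) simp_all
  finally show ?thesis .
qed

section \<open>The limit \<open>\<beta> \<rightarrow> 0\<close>\<close>

lemma tendsto_enriched_left_nodes:
  assumes E: "eventually (\<lambda>\<beta>. enriched_mesh a b N (X \<beta>) (Y \<beta>) \<beta>) (at_right 0)"
    and X: "((\<lambda>\<beta>. X \<beta> i) \<longlongrightarrow> c) (at_right 0)" and i: "i \<le> Suc N"
  shows "((\<lambda>\<beta>. Y \<beta> i) \<longlongrightarrow> c) (at_right 0)"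
proof -
  have "((\<lambda>\<beta>. X \<beta> i - \<beta>) \<longlongrightarrow> c - 0) (at_right 0)"
    by (intro tendsto_diff X tendsto_ident_at)
  moreover have "eventually (\<lambda>\<beta>. X \<beta> i - \<beta> = Y \<beta> i) (at_right 0)"
    using E by (rule eventually_mono) (use i in \<open>auto simp: enriched_mesh_def\<close>)
  ultimately show ?thesis
    by (auto intro: Lim_transform_eventually)
qed

lemma tendsto_fe_form_embed:
  assumes mesh: "\<forall>i\<le>N. \<xi> i < \<xi> (Suc i)" and u: "in_VhD \<xi> N u" and v: "in_VhD \<xi> N v"
    and E: "eventually (\<lambda>\<beta>. enriched_mesh a b N (X \<beta>) (Y \<beta>) \<beta>) (at_right 0)"
    and X: "\<And>i. i \<le> Suc N \<Longrightarrow> ((\<lambda>\<beta>. X \<beta> i) \<longlongrightarrow> \<xi> i) (at_right 0)"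
    and Y: "\<And>i. i \<le> Suc N \<Longrightarrow> ((\<lambda>\<beta>. Y \<beta> i) \<longlongrightarrow> \<xi> i) (at_right 0)"
  shows "((\<lambda>\<beta>. fe_form a b N (X \<beta>) (Y \<beta>) D \<beta> (embed \<xi> N (X \<beta>) (Y \<beta>) u) (embed \<xi> N (X \<beta>) (Y \<beta>) v))
           \<longlongrightarrow> bz_form \<xi> N D u v) (at_right 0)"
proof -
  have "((\<lambda>\<beta>. (\<Sum>i\<le>N. increment \<xi> u i * increment \<xi> v i / (Y \<beta> (Suc i) - X \<beta> i))
                + D * (\<Sum>i\<le>Suc N. jump \<xi> N u i * jump \<xi> N v i))
          \<longlongrightarrow> bz_form \<xi> N D u v) (at_right 0)"
    unfolding bz_form_eq[OF mesh u v] using mesh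
    by (intro tendsto_intros X Y) auto
  then show ?thesis
    by (rule Lim_transform_eventually) (use E fe_form_embed in \<open>auto elim: eventually_mono\<close>)
qed

lemma tendsto_integral_mult_embed:
  fixes f :: "real \<Rightarrow> real"
  assumes mesh: "\<xi> 0 = a" "\<xi> (Suc N) = b" "\<forall>i\<le>N. \<xi> i < \<xi> (Suc i)"
    and f: "f absolutely_integrable_on {a..b}" and v: "in_VhD \<xi> N v"
    and E: "eventually (\<lambda>\<beta>. enriched_mesh a b N (X \<beta>) (Y \<beta>) \<beta>) (at_right 0)"
    and X: "\<And>i. i \<le> Suc N \<Longrightarrow> ((\<lambda>\<beta>. X \<beta> i) \<longlongrightarrow> \<xi> i) (at_right 0)"
    and Y: "\<And>i. i \<le> Suc N \<Longrightarrow> ((\<lambda>\<beta>. Y \<beta> i) \<longlongrightarrow> \<xi> i) (at_right 0)"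
  shows "((\<lambda>\<beta>. integral {a..b} (\<lambda>x. f x * embed \<xi> N (X \<beta>) (Y \<beta>) v x))
           \<longlongrightarrow> integral {a..b} (\<lambda>x. f x * v x)) (at_right 0)"
proof -
  have fi: "f integrable_on {a..b}"
    using f by (simp add: absolutely_integrable_on_def)
  have xf: "(\<lambda>x. x * f x) integrable_on {a..b}"
    using f by (rule integrable_mult_id)
  have strict: "\<forall>k<Suc N. \<xi> k < \<xi> (Suc k)"
    using mesh(3) by auto
  have \<xi>: "a \<le> \<xi> i" "\<xi> i \<le> b" if "i \<le> Suc N" for i
    using nodes_mono_le[OF strict, of 0 i] nodes_mono_le[OF strict, of i "Suc N"] that mesh(1,2) by auto
  have "((\<lambda>\<beta>. (\<Sum>i\<le>Suc N. lin_load f (Y \<beta> i) (X \<beta> i) (enr_vals \<xi> N v (2 * i)) (enr_vals \<xi> N v (Suc (2 * i))))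
          + (\<Sum>i\<le>N. lin_load f (X \<beta> i) (Y \<beta> (Suc i)) (rval v (\<xi> i)) (lval v (\<xi> (Suc i)))))
        \<longlongrightarrow> 0 + (\<Sum>i\<le>N. lin_load f (\<xi> i) (\<xi> (Suc i)) (rval v (\<xi> i)) (lval v (\<xi> (Suc i))))) (at_right 0)"
  proof (intro tendsto_add tendsto_null_sum tendsto_sum)
    fix i assume "i \<in> {..Suc N}"
    then have i: "i \<le> Suc N" by simp
    show "((\<lambda>\<beta>. lin_load f (Y \<beta> i) (X \<beta> i) (enr_vals \<xi> N v (2 * i)) (enr_vals \<xi> N v (Suc (2 * i))))
            \<longlongrightarrow> 0) (at_right 0)"
      using E enriched_mesh_bounds(1)[of a b N _ _ _ i] i \<xi>[OF i]
      by (intro tendsto_lin_load_collapse[OF f xf Y[OF i] X[OF i]]) (auto elim: eventually_mono)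
  next
    fix i assume "i \<in> {..N}"
    then have i: "i \<le> N" by simp
    have "eventually (\<lambda>\<beta>. a \<le> X \<beta> i \<and> X \<beta> i \<le> Y \<beta> (Suc i) \<and> Y \<beta> (Suc i) \<le> b) (at_right 0)"
      using E by (rule eventually_mono) (use enriched_mesh_bounds(2) i in fastforce)
    then show "((\<lambda>\<beta>. lin_load f (X \<beta> i) (Y \<beta> (Suc i)) (rval v (\<xi> i)) (lval v (\<xi> (Suc i))))
            \<longlongrightarrow> lin_load f (\<xi> i) (\<xi> (Suc i)) (rval v (\<xi> i)) (lval v (\<xi> (Suc i)))) (at_right 0)"
      using i \<xi>[of i] \<xi>[of "Suc i"] mesh(3) by (intro tendsto_lin_load[OF fi xf X Y]) auto
  qed
  then show ?thesis
    unfolding integral_mult_VhD[OF mesh fi xf v] add_0_left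
    by (rule Lim_transform_eventually)
      (use E integral_mult_embed[OF _ fi xf] in \<open>auto elim: eventually_mono\<close>)
qed

theorem theorem2p1:
  fixes a b D :: real and N :: nat and \<xi> :: "nat \<Rightarrow> real" and f u :: "real \<Rightarrow> real"
    and X Y :: "real \<Rightarrow> nat \<Rightarrow> real"
  assumes D_pos: "D > 0"
    and mesh: "\<xi> 0 = a" "\<xi> (Suc N) = b" "\<forall>i\<le>N. \<xi> i < \<xi> (Suc i)"
    and f: "f absolutely_integrable_on {a..b}"
    and enriched: "\<forall>\<^sub>F \<beta> in at_right 0.
        Y \<beta> 0 = a \<and> X \<beta> (Suc N) = b
        \<and> (\<forall>i\<le>Suc N. X \<beta> i - Y \<beta> i = \<beta>)
        \<and> (\<forall>i\<le>N. X \<beta> i < Y \<beta> (Suc i))"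
    and collapse: "\<forall>i\<le>Suc N. ((\<lambda>\<beta>. X \<beta> i) \<longlongrightarrow> \<xi> i) (at_right 0)"
    and u: "in_VhD \<xi> N u"
  shows "(\<forall>v. in_VhD \<xi> N v \<longrightarrow>
            ((\<lambda>\<beta>. fe_form a b N (X \<beta>) (Y \<beta>) D \<beta>
                      (embed \<xi> N (X \<beta>) (Y \<beta>) u) (embed \<xi> N (X \<beta>) (Y \<beta>) v)
                    - integral {a..b} (\<lambda>x. f x * embed \<xi> N (X \<beta>) (Y \<beta>) v x))
              \<longlongrightarrow> 0) (at_right 0))
         \<longleftrightarrow>
         (\<forall>v. in_VhD \<xi> N v \<longrightarrow>
            bz_form \<xi> N D u v = integral {a..b} (\<lambda>x. f x * v x))"
proof -
  have E: "eventually (\<lambda>\<beta>. enriched_mesh a b N (X \<beta>) (Y \<beta>) \<beta>) (at_right 0)"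
    using eventually_conj[OF enriched eventually_at_right_less[of "0::real"]]
    by (rule eventually_mono) (auto simp: enriched_mesh_def)
  have X: "((\<lambda>\<beta>. X \<beta> i) \<longlongrightarrow> \<xi> i) (at_right 0)" if "i \<le> Suc N" for i
    using collapse that by blast
  have Y: "((\<lambda>\<beta>. Y \<beta> i) \<longlongrightarrow> \<xi> i) (at_right 0)" if "i \<le> Suc N" for i
    by (rule tendsto_enriched_left_nodes[OF E X[OF that] that])
  have residual:
    "((\<lambda>\<beta>. fe_form a b N (X \<beta>) (Y \<beta>) D \<beta> (embed \<xi> N (X \<beta>) (Y \<beta>) u) (embed \<xi> N (X \<beta>) (Y \<beta>) v)
                - integral {a..b} (\<lambda>x. f x * embed \<xi> N (X \<beta>) (Y \<beta>) v x))
       \<longlongrightarrow> bz_form \<xi> N D u v - integral {a..b} (\<lambda>x. f x * v x)) (at_right 0)"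
    if v: "in_VhD \<xi> N v" for v
    by (intro tendsto_diff tendsto_fe_form_embed[OF mesh(3) u v E X Y]
        tendsto_integral_mult_embed[OF mesh f v E X Y])
  have limit_unique: "(g \<longlongrightarrow> 0) (at_right 0) \<longleftrightarrow> l = 0"
    if "(g \<longlongrightarrow> l) (at_right (0::real))" for g :: "real \<Rightarrow> real" and l
    using that tendsto_unique[OF trivial_limit_at_right_real] by metis
  show ?thesis
    using limit_unique[OF residual] by auto
qed

end
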